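(* Fix a base $B>1$. Let $\mathfrak{B}_0$ be a fixed $m$-dimensional box and let $\mathfrak{B}_0\supset\mathfrak{B}_1\supset\cdots$ be a linear-fragmentation process. Then the sequence of box volumes $\mathrm{Vol}_m(\mathfrak{B}_n)$ (the products of the $m$ side lengths of $\mathfrak{B}_n$) converges to strong Benford behavior in base $B$ as $n\to\infty$.
   Context: Significand: for $x>0$, $S_B(x)$ is the unique number in $[1,B)$ with $\log_B x-\log_B S_B(x)\in\mathbb{Z}$. A sequence of positive random variables $X^{(n)}$ converges to strong Benford behavior in base $B$ if $\mathbb{P}(S_B(X^{(n)})\le D)\to\log_B D$ for every $D\in[1,B]$. An $m$-dimensional box is a set $[a_1,b_1]\times\cdots\times[a_m,b_m]$ with finite $a_i<b_i$. A linear-fragmentation process is a sequence of random $m$-dimensional boxes $\mathfrak{B}_0\supset\mathfrak{B}_1\supset\cdots$ where at each step $n\ge1$ independent proportion cuts $P_1^{(n)},\dots,P_m^{(n)}\in(0,1)$ are drawn (independent across $i$ and $n$, $P_i^{(n)}$ distributed as a fixed continuous random variable $P_i$), and the $i$-th side length of $\mathfrak{B}_{n-1}$ is multiplied by $P_i^{(n)}$ to give that of $\mathfrak{B}_n$. It is assumed that $\log_B P_i$ has finite mean, variance and third absolute moment, with $\mathbb{E}[\log_B P_i]=\mu_P$ and $\mathrm{Var}[\log_B P_i]=\sigma_P^2>0$ the same for all $i$. *)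

theory Defs
  imports "HOL-Probability.Probability"
begin

definition significand :: "real \<Rightarrow> real \<Rightarrow> real" where
  "significand B x = x / B powr (of_int \<lfloor>log B x\<rfloor>)"

definition strong_Benford :: "'a measure \<Rightarrow> real \<Rightarrow> (nat \<Rightarrow> 'a \<Rightarrow> real) \<Rightarrow> bool" where
  "strong_Benford M B X \<longleftrightarrow>
     (\<forall>D\<in>{1..B}. (\<lambda>n. measure M {\<omega>\<in>space M. significand B (X n \<omega>) \<le> D}) \<longlonglongrightarrow> log B D)"

definition box_vol :: "nat \<Rightarrow> (nat \<Rightarrow> real) \<Rightarrow> (nat \<Rightarrow> real) \<Rightarrow> real" where
  "box_vol m lo hi = (\<Prod>i<m. hi i - lo i)"

end

theory Submission
  imports Defs
begin

text \<open>The base-\<open>B\<close> logarithm \<open>Z\<^sub>n\<close> of the volume of the \<open>n\<close>-th box is the logarithm of the initial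
  volume plus the sum of \<open>log\<^sub>B P\<^sub>i\<^sup>(\<^sup>k\<^sup>)\<close> over \<open>i < m\<close> and \<open>1 \<le> k \<le> n\<close>.
  Strong Benford behaviour means that \<open>Z\<^sub>n\<close> modulo 1 tends to the uniform distribution, and by
  Weyl's criterion (uniform approximation of continuous periodic functions by trigonometric
  polynomials) it suffices that \<open>E exp(2\<pi>ihZ\<^sub>n) \<rightarrow> 0\<close> for every integer \<open>h \<noteq> 0\<close>. By independence this
  expectation is a unimodular constant times \<open>q\<^sup>n\<close>, where \<open>q\<close> is the product over \<open>i\<close> of the
  characteristic functions of \<open>log\<^sub>B P\<^sub>i\<close> at \<open>2\<pi>h\<close>. Each factor has modulus less than 1, because a
  variable whose characteristic function has modulus 1 at some \<open>u \<noteq> 0\<close> is concentrated on a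
  lattice and so has atoms, while \<open>P\<^sub>i\<close> is continuous. Hence \<open>q\<^sup>n \<rightarrow> 0\<close>.\<close>

section \<open>Trigonometric polynomials\<close>

definition trig_poly :: "(int \<Rightarrow> complex) \<Rightarrow> int set \<Rightarrow> real \<Rightarrow> complex" where
  "trig_poly c H \<theta> = (\<Sum>h\<in>H. c h * cis (2*pi * of_int h * \<theta>))"

lemma continuous_on_trig_poly [continuous_intros]: "continuous_on A (trig_poly c H)"
  unfolding trig_poly_def by (intro continuous_intros)

lemma trig_poly_extend:
  assumes "finite H'" "H \<subseteq> H'"
  shows "trig_poly c H \<theta> = trig_poly (\<lambda>h. if h \<in> H then c h else 0) H' \<theta>"
  unfolding trig_poly_def using assms by (intro sum.mono_neutral_cong_left) auto

lemma trig_poly_add: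
  assumes "finite H1" "finite H2"
  shows "trig_poly c1 H1 \<theta> + trig_poly c2 H2 \<theta> =
    trig_poly (\<lambda>h. (if h \<in> H1 then c1 h else 0) + (if h \<in> H2 then c2 h else 0)) (H1 \<union> H2) \<theta>"
  using assms
  by (simp add: trig_poly_extend[of "H1 \<union> H2" H1 c1] trig_poly_extend[of "H1 \<union> H2" H2 c2])
     (simp add: trig_poly_def sum.distrib distrib_right)

lemma trig_poly_mult:
  assumes "finite H1" "finite H2"
  shows "trig_poly c1 H1 \<theta> * trig_poly c2 H2 \<theta> =
    trig_poly (\<lambda>h. \<Sum>p\<in>{p\<in>H1\<times>H2. fst p + snd p = h}. c1 (fst p) * c2 (snd p))
       ((\<lambda>p. fst p + snd p) ` (H1 \<times> H2)) \<theta>"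
proof -
  have "trig_poly c1 H1 \<theta> * trig_poly c2 H2 \<theta> =
      (\<Sum>p\<in>H1\<times>H2. c1 (fst p) * c2 (snd p) * cis (2*pi * of_int (fst p + snd p) * \<theta>))"
    unfolding trig_poly_def sum_product sum.cartesian_product
    by (intro sum.cong refl) (auto simp: cis_mult algebra_simps)
  also have "\<dots> = (\<Sum>h\<in>(\<lambda>p. fst p + snd p) ` (H1 \<times> H2).
       \<Sum>p\<in>{p\<in>H1\<times>H2. fst p + snd p = h}. c1 (fst p) * c2 (snd p) * cis (2*pi * of_int (fst p + snd p) * \<theta>))"
    using assms by (intro sum.group[symmetric]) auto
  also have "\<dots> = trig_poly (\<lambda>h. \<Sum>p\<in>{p\<in>H1\<times>H2. fst p + snd p = h}. c1 (fst p) * c2 (snd p))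
       ((\<lambda>p. fst p + snd p) ` (H1 \<times> H2)) \<theta>"
    unfolding trig_poly_def sum_distrib_right by (intro sum.cong refl) auto
  finally show ?thesis .
qed

lemma trig_poly_frac: "trig_poly c H (frac x) = trig_poly c H x"
proof -
  have "cis (2*pi * of_int h * frac x) = cis (2*pi * of_int h * x)" for h
  proof -
    have "cis (2*pi * of_int h * x) = cis (2*pi * of_int h * frac x) * cis (2*pi * of_int (h * \<lfloor>x\<rfloor>))"
      by (simp add: cis_mult frac_def algebra_simps)
    then show ?thesis by simp
  qed
  then show ?thesis by (simp add: trig_poly_def)
qed

text \<open>\<open>\<theta> \<mapsto> cis (2\<pi>\<theta>)\<close> is a quotient map from \<open>[0, 1]\<close> onto the unit circle.\<close>
lemma continuous_periodic_lift_circle: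
  fixes g :: "real \<Rightarrow> real"
  assumes g: "continuous_on {0..1} g" and g01: "g 0 = g 1"
  obtains G where "continuous_on (sphere 0 1) G" "\<And>\<theta>. \<theta> \<in> {0..1} \<Longrightarrow> G (cis (2*pi*\<theta>)) = g \<theta>"
proof -
  define f where "f \<theta> = cis (2*pi*\<theta>)" for \<theta>
  define G where "G z = g (Arg2pi z / (2*pi))" for z
  have f_image: "f ` {0..1} = sphere 0 1"
  proof
    show "f ` {0..1} \<subseteq> sphere 0 1"
      by (auto simp: f_def)
    show "sphere 0 1 \<subseteq> f ` {0..1}"
    proof
      fix z :: complex assume z: "z \<in> sphere 0 1"
      have "z = cis (Arg2pi z)"
        using Arg2pi[of z] z by (auto simp: is_Arg_def cis_conv_exp)
      moreover have "Arg2pi z / (2*pi) \<in> {0..1}"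
        using Arg2pi[of z] by auto
      ultimately show "z \<in> f ` {0..1}"
        unfolding f_def by (intro image_eqI[of _ _ "Arg2pi z / (2*pi)"]) auto
    qed
  qed
  have Gf: "G (f \<theta>) = g \<theta>" if "\<theta> \<in> {0..1}" for \<theta>
  proof (cases "\<theta> = 1")
    case True
    then show ?thesis using g01 Arg2pi_of_real[of 1] by (simp add: G_def f_def)
  next
    case False
    with that have "Arg2pi (f \<theta>) = 2*pi*\<theta>"
      by (intro Arg2pi_unique[of 1]) (auto simp: f_def cis_conv_exp)
    then show ?thesis by (simp add: G_def)
  qed
  have "quotient_map (top_of_set {0..1}) (top_of_set (sphere 0 1)) f"
  proof (rule continuous_imp_quotient_map)
    show "continuous_map (top_of_set {0..1}) (top_of_set (sphere 0 1)) f"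
      using f_image unfolding f_def
      by (auto simp: continuous_map_in_subtopology intro!: continuous_intros)
    show "compact_space (top_of_set {0..1::real})"
      by (simp add: compact_space_subtopology)
    show "Hausdorff_space (top_of_set (sphere (0::complex) 1))"
      by (simp add: Hausdorff_space_subtopology)
    show "f ` topspace (top_of_set {0..1}) = topspace (top_of_set (sphere 0 1))"
      using f_image by simp
  qed
  moreover have "continuous_map (top_of_set {0..1}) euclideanreal (G \<circ> f)"
  proof (rule continuous_map_eq)
    show "continuous_map (top_of_set {0..1}) euclideanreal g"
      using g by simp
  qed (simp add: Gf)
  ultimately have "continuous_map (top_of_set (sphere 0 1)) euclideanreal G"
    by (rule continuous_compose_quotient_map)
  with that show ?thesis using Gf unfolding f_def by simp
qed

definition real_trig_polys_on_circle :: "(complex \<Rightarrow> real) set" where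
  "real_trig_polys_on_circle = {G. continuous_on (sphere 0 1) G \<and>
     (\<exists>c H. finite H \<and> (\<forall>\<theta>. complex_of_real (G (cis (2*pi*\<theta>))) = trig_poly c H \<theta>))}"

lemma function_ring_real_trig_polys_on_circle:
  "function_ring_on real_trig_polys_on_circle (sphere 0 1)"
proof
  show "(\<lambda>x. f x + g x) \<in> real_trig_polys_on_circle" and "(\<lambda>x. f x * g x) \<in> real_trig_polys_on_circle"
    if "f \<in> real_trig_polys_on_circle" "g \<in> real_trig_polys_on_circle" for f g
  proof -
    from that obtain c1 H1 c2 H2 where "finite H1" "finite H2"
      "\<And>\<theta>. complex_of_real (f (cis (2*pi*\<theta>))) = trig_poly c1 H1 \<theta>"
      "\<And>\<theta>. complex_of_real (g (cis (2*pi*\<theta>))) = trig_poly c2 H2 \<theta>"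
      "continuous_on (sphere 0 1) f" "continuous_on (sphere 0 1) g"
      by (auto simp: real_trig_polys_on_circle_def)
    note fg = this
    from fg show "(\<lambda>x. f x + g x) \<in> real_trig_polys_on_circle"
      unfolding real_trig_polys_on_circle_def
      by (auto intro!: continuous_intros exI[of _ "\<lambda>h. (if h \<in> H1 then c1 h else 0) + (if h \<in> H2 then c2 h else 0)"]
          exI[of _ "H1 \<union> H2"] simp: trig_poly_add)
    from fg show "(\<lambda>x. f x * g x) \<in> real_trig_polys_on_circle"
      unfolding real_trig_polys_on_circle_def
      by (auto intro!: continuous_intros exI[of _ "\<lambda>h. \<Sum>p\<in>{p\<in>H1\<times>H2. fst p + snd p = h}. c1 (fst p) * c2 (snd p)"]
          exI[of _ "(\<lambda>p. fst p + snd p) ` (H1 \<times> H2)"] simp: trig_poly_mult)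
  qed
  show "(\<lambda>_. c) \<in> real_trig_polys_on_circle" for c
    unfolding real_trig_polys_on_circle_def
    by (auto intro!: exI[of _ "{0}"] exI[of _ "\<lambda>_. complex_of_real c"] simp: trig_poly_def)
  show "\<exists>f\<in>real_trig_polys_on_circle. f x \<noteq> f y" if "x \<noteq> y" for x y :: complex
  proof -
    have "complex_of_real (Re (cis (2*pi*\<theta>))) = trig_poly (\<lambda>_. 1/2) {1,-1} \<theta>" for \<theta>
      by (simp add: trig_poly_def complex_eq_iff)
    then have "Re \<in> real_trig_polys_on_circle"
      unfolding real_trig_polys_on_circle_def by (auto intro!: continuous_intros exI[of _ "{1,-1}"])
    moreover have "complex_of_real (Im (cis (2*pi*\<theta>))) =
        trig_poly (\<lambda>h. if h = 1 then -\<i>/2 else \<i>/2) {1,-1} \<theta>" for \<theta>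
      by (simp add: trig_poly_def complex_eq_iff)
    then have "Im \<in> real_trig_polys_on_circle"
      unfolding real_trig_polys_on_circle_def by (auto intro!: continuous_intros exI[of _ "{1,-1}"])
    moreover from that have "Re x \<noteq> Re y \<or> Im x \<noteq> Im y"
      by (simp add: complex_eq_iff)
    ultimately show ?thesis
      by blast
  qed
  show "compact (sphere (0::complex) 1)"
    by simp
  show "continuous_on (sphere 0 1) f" if "f \<in> real_trig_polys_on_circle" for f
    using that by (simp add: real_trig_polys_on_circle_def)
qed

lemma trig_poly_approx:
  fixes g :: "real \<Rightarrow> real"
  assumes "continuous_on {0..1} g" "g 0 = g 1" "e > 0"
  obtains c H where "finite H" "\<And>\<theta>. \<theta> \<in> {0..1} \<Longrightarrow> \<bar>g \<theta> - Re (trig_poly c H \<theta>)\<bar> < e"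
proof -
  obtain G where G: "continuous_on (sphere 0 1) G" "\<And>\<theta>. \<theta> \<in> {0..1} \<Longrightarrow> G (cis (2*pi*\<theta>)) = g \<theta>"
    using continuous_periodic_lift_circle assms by metis
  obtain F where F: "F \<in> real_trig_polys_on_circle" "\<And>z. z \<in> sphere 0 1 \<Longrightarrow> \<bar>G z - F z\<bar> < e"
    using function_ring_on.Stone_Weierstrass_basic[OF function_ring_real_trig_polys_on_circle G(1) \<open>e > 0\<close>]
    by blast
  then obtain c H where "finite H" "\<And>\<theta>. complex_of_real (F (cis (2*pi*\<theta>))) = trig_poly c H \<theta>"
    by (auto simp: real_trig_polys_on_circle_def)
  moreover from this(2) have "F (cis (2*pi*\<theta>)) = Re (trig_poly c H \<theta>)" for \<theta>
    by (metis Re_complex_of_real)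
  moreover have "cis (2*pi*\<theta>) \<in> sphere 0 1" for \<theta>
    by simp
  ultimately show ?thesis
    using that F(2) G(2) by metis
qed

section \<open>Weyl's equidistribution criterion\<close>

lemma borel_measurable_frac [measurable]: "(frac :: real \<Rightarrow> real) \<in> borel_measurable borel"
  unfolding frac_def by measurable

lemma set_integral_cis_01:
  "(LINT \<theta>:{0..1}|lborel. cis (2*pi * of_int h * \<theta>)) = (if h = 0 then 1 else 0)"
proof -
  define a where "a = 2*pi * of_int h"
  have "(LINT \<theta>:{0..1}|lborel. cis (a * \<theta>)) = (CLBINT \<theta>=ereal 0..ereal 1. cis (a * \<theta>))"
    by (subst interval_integral_Icc) auto
  also have "\<dots> = (if h = 0 then 1 else 0)"
  proof (cases "h = 0")
    case True
    have "(CLBINT \<theta>=ereal 0..ereal 1. cis (a * \<theta>)) = complex_of_real 1 - complex_of_real 0"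
      by (rule interval_integral_FTC_finite)
        (auto intro!: derivative_eq_intros continuous_intros simp: a_def True has_vector_derivative_complex_iff)
    then show ?thesis using True by simp
  next
    case False
    then have "a \<noteq> 0" by (simp add: a_def)
    have "(CLBINT \<theta>=ereal 0..ereal 1. cis (a * \<theta>)) = (-\<i>/a) * cis (a*1) - (-\<i>/a) * cis (a*0)"
    proof (rule interval_integral_FTC_finite)
      fix x :: real
      have "((\<lambda>\<theta>. (-\<i>/a) * cis (a*\<theta>)) has_vector_derivative (-\<i>/a) * (\<i> * a * cis (a*x)))
          (at x within {min 0 1..max 0 1})"
        by (auto intro!: derivative_eq_intros simp: has_vector_derivative_complex_iff)
      then show "((\<lambda>\<theta>. (-\<i>/a) * cis (a*\<theta>)) has_vector_derivative cis (a*x)) (at x within {min 0 1..max 0 1})"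
        using \<open>a \<noteq> 0\<close> by (simp add: field_simps)
    qed (intro continuous_intros)
    also have "cis (a*1) = 1"
      by (simp add: a_def)
    finally show ?thesis
      using False by simp
  qed
  finally show ?thesis
    by (simp add: a_def)
qed

lemma set_integral_trig_poly_01:
  assumes "finite H"
  shows "(LINT \<theta>:{0..1}|lborel. trig_poly c H \<theta>) = (if 0 \<in> H then c 0 else 0)"
proof -
  have "set_integrable lborel {0..1} (\<lambda>\<theta>. c h * cis (2*pi * of_int h * \<theta>))" for h
    by (intro borel_integrable_atLeastAtMost' continuous_intros)
  then have "(LINT \<theta>:{0..1}|lborel. trig_poly c H \<theta>) =
      (\<Sum>h\<in>H. c h * (LINT \<theta>:{0..1}|lborel. cis (2*pi * of_int h * \<theta>)))"
    unfolding trig_poly_def set_lebesgue_integral_def set_integrable_def scaleR_sum_right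
    by (subst Bochner_Integration.integral_sum) (simp_all add: set_integral_mult_right[unfolded set_lebesgue_integral_def])
  also have "\<dots> = (if 0 \<in> H then c 0 else 0)"
    using assms by (simp add: set_integral_cis_01 if_distrib cong: if_cong)
  finally show ?thesis .
qed

lemma (in real_distribution) integrable_cis_monomial:
  "integrable M (\<lambda>x. a * cis (u * x))"
  by (intro integrable_const_bound[where B="norm a"])
    (auto simp: norm_mult measurable_cong_sets[OF events_eq_borel refl]
      intro!: borel_measurable_continuous_onI continuous_intros)

lemma (in real_distribution) integrable_trig_poly: "integrable M (trig_poly c H)"
  unfolding trig_poly_def by (intro Bochner_Integration.integrable_sum integrable_cis_monomial)

lemma (in real_distribution) integral_trig_poly:
  "(\<integral>x. trig_poly c H x \<partial>M) = (\<Sum>h\<in>H. c h * char M (2*pi * of_int h))"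
proof -
  have "(\<integral>x. trig_poly c H x \<partial>M) = (\<Sum>h\<in>H. \<integral>x. c h * cis (2*pi * of_int h * x) \<partial>M)"
    unfolding trig_poly_def by (rule Bochner_Integration.integral_sum) (rule integrable_cis_monomial)
  then show ?thesis
    by (simp add: char_def cis_conv_exp)
qed

lemma (in prob_space) abs_integral_diff_le:
  fixes f g :: "'a \<Rightarrow> real"
  assumes "integrable M f" "integrable M g" "\<And>x. x \<in> space M \<Longrightarrow> \<bar>f x - g x\<bar> \<le> e"
  shows "\<bar>integral\<^sup>L M f - integral\<^sup>L M g\<bar> \<le> e"
proof -
  have "\<bar>integral\<^sup>L M f - integral\<^sup>L M g\<bar> = \<bar>\<integral>x. f x - g x \<partial>M\<bar>"
    using assms by simp
  also have "\<dots> \<le> (\<integral>x. \<bar>f x - g x\<bar> \<partial>M)"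
    using integral_norm_bound[of M "\<lambda>x. f x - g x"] by simp
  also have "\<dots> \<le> (\<integral>x. e \<partial>M)"
    using assms by (intro integral_mono) auto
  finally show ?thesis
    by (simp add: prob_space)
qed

lemma abs_set_integral_01_diff_le:
  fixes f g :: "real \<Rightarrow> real"
  assumes "set_integrable lborel {0..1} f" "set_integrable lborel {0..1} g"
    and "\<And>x. x \<in> {0..1} \<Longrightarrow> \<bar>f x - g x\<bar> \<le> e"
  shows "\<bar>(LINT x:{0..1}|lborel. f x) - (LINT x:{0..1}|lborel. g x)\<bar> \<le> e"
proof -
  have "\<bar>(LINT x:{0..1}|lborel. f x) - (LINT x:{0..1}|lborel. g x)\<bar> = \<bar>LINT x:{0..1}|lborel. f x - g x\<bar>"
    using assms by simp
  also have "\<dots> \<le> (LINT x:{0..1}|lborel. \<bar>f x - g x\<bar>)"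
    using set_integral_norm_bound[of lborel "{0..1}" "\<lambda>x. f x - g x"] assms by simp
  also have "\<dots> \<le> (LINT x:{0..1::real}|lborel. e)"
  proof (rule set_integral_mono)
    show "set_integrable lborel {0..1} (\<lambda>x. \<bar>f x - g x\<bar>)"
      using assms by (intro set_integrable_abs set_integral_diff)
  qed (use assms borel_integrable_atLeastAtMost'[OF continuous_on_const] in auto)
  finally show ?thesis
    by (simp add: set_integral_const)
qed

lemma (in real_distribution) integrable_comp_frac:
  fixes g :: "real \<Rightarrow> real"
  assumes g: "continuous_on UNIV g"
  shows "integrable M (\<lambda>x. g (frac x))"
proof -
  have "bounded (g ` {0..1})"
    by (intro compact_imp_bounded compact_continuous_image continuous_on_subset[OF g]) auto
  then obtain K where K: "\<And>\<theta>. \<theta> \<in> {0..1} \<Longrightarrow> \<bar>g \<theta>\<bar> \<le> K"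
    unfolding bounded_real by blast
  show ?thesis
  proof (rule integrable_const_bound[where B=K])
    have frac_01: "frac x \<in> {0..1}" for x
      by (simp add: frac_lt_1 less_imp_le)
    show "AE x in M. norm (g (frac x)) \<le> K"
      using K[OF frac_01] by (intro AE_I2) simp
    have "g \<in> borel_measurable borel"
      using g by (rule borel_measurable_continuous_onI)
    from measurable_compose[OF borel_measurable_frac this]
    show "(\<lambda>x. g (frac x)) \<in> borel_measurable M"
      by (simp add: measurable_cong_sets[OF events_eq_borel refl])
  qed
qed

lemma set_integral_01_ge_interval_length:
  fixes g :: "real \<Rightarrow> real"
  assumes "0 \<le> a" "a \<le> b" "b \<le> 1" and g: "continuous_on {0..1} g"
    and "\<And>\<theta>. \<theta> \<in> {0..1} \<Longrightarrow> indicator {a..b} \<theta> \<le> g \<theta>"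
  shows "b - a \<le> (LINT \<theta>:{0..1}|lborel. g \<theta>)"
proof -
  have "b - a = (LINT \<theta>:{0..1}|lborel. indicator {a..b} \<theta>)"
    using assms unfolding set_lebesgue_integral_def
    by (simp add: indicator_inter_arith[symmetric] Int_absorb1 mult.commute)
  also have "\<dots> \<le> (LINT \<theta>:{0..1}|lborel. g \<theta>)"
  proof (rule set_integral_mono)
    show "set_integrable lborel {0..1} (\<lambda>\<theta>. indicator {a..b} \<theta> :: real)"
      unfolding set_integrable_def
      by (intro integrable_mult_indicator) (auto simp: less_top[symmetric] emeasure_lborel_Icc_eq)
  qed (use assms borel_integrable_atLeastAtMost'[OF g] in auto)
  finally show ?thesis .
qed

lemma periodic_minorant_of_interval:
  fixes s r a :: real
  assumes "0 \<le> s" "s < r" "r \<le> 1" "a < r - s"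
  obtains g where "continuous_on UNIV g" "g 0 = g 1"
    "\<And>\<theta>. g \<theta> \<le> indicator {s<..<r} \<theta>" "a < (LINT \<theta>:{0..1}|lborel. g \<theta>)"
proof -
  define d where "d = (r - s - max 0 a) / 4"
  have "0 \<le> max 0 a" "a \<le> max 0 a" "max 0 a < r - s"
    using assms by auto
  then have d: "0 < d" "s + d \<le> r - d" "a < r - s - 2*d"
    unfolding d_def by (simp_all add: field_simps)
  \<comment> \<open>a trapezoid supported in \<open>[s, r]\<close> with plateau \<open>[s + d, r - d]\<close>\<close>
  define g where "g \<theta> = max 0 (min 1 (min ((\<theta> - s) / d) ((r - \<theta>) / d)))" for \<theta>
  have g_cont: "continuous_on UNIV g"
    unfolding g_def using \<open>0 < d\<close> by (intro continuous_intros) auto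
  have "- (s / d) \<le> 0" "(r - 1) / d \<le> 0"
    using assms \<open>0 < d\<close> by (simp_all add: divide_nonpos_pos)
  then have "g 0 = g 1"
    by (simp add: g_def)
  moreover have "g \<theta> \<le> indicator {s<..<r} \<theta>" for \<theta>
  proof (cases "s < \<theta> \<and> \<theta> < r")
    case False
    then have "(\<theta> - s) / d \<le> 0 \<or> (r - \<theta>) / d \<le> 0"
      using \<open>0 < d\<close> by (auto simp: divide_nonpos_pos)
    with False show ?thesis
      by (auto simp: g_def)
  qed (simp add: g_def)
  moreover have "(r - d) - (s + d) \<le> (LINT \<theta>:{0..1}|lborel. g \<theta>)"
    using assms d
    by (intro set_integral_01_ge_interval_length continuous_on_subset[OF g_cont])
      (auto simp: g_def indicator_def field_simps)
  ultimately show ?thesis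
    using that g_cont d by simp
qed

locale vanishing_fourier_coefficients =
  fixes \<mu> :: "nat \<Rightarrow> real measure"
  assumes real_distribution_\<mu>: "\<And>n. real_distribution (\<mu> n)"
    and char_\<mu>_tendsto_0: "\<And>h::int. h \<noteq> 0 \<Longrightarrow> (\<lambda>n. char (\<mu> n) (2*pi * of_int h)) \<longlonglongrightarrow> 0"
begin

lemma tendsto_integral_trig_poly:
  assumes "finite H"
  shows "(\<lambda>n. \<integral>x. trig_poly c H x \<partial>\<mu> n) \<longlonglongrightarrow> (LINT \<theta>:{0..1}|lborel. trig_poly c H \<theta>)"
proof -
  have "(\<lambda>n. \<Sum>h\<in>H. c h * char (\<mu> n) (2*pi * of_int h)) \<longlonglongrightarrow> (\<Sum>h\<in>H. c h * (if h = 0 then 1 else 0))"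
  proof (intro tendsto_intros)
    fix h :: int
    show "(\<lambda>n. char (\<mu> n) (2*pi * of_int h)) \<longlonglongrightarrow> (if h = 0 then 1 else 0)"
      using char_\<mu>_tendsto_0[of h] real_distribution.char_zero[OF real_distribution_\<mu>]
      by (cases "h = 0") simp_all
  qed
  then show ?thesis
    using assms
    by (simp add: real_distribution.integral_trig_poly[OF real_distribution_\<mu>] set_integral_trig_poly_01
        if_distrib cong: if_cong)
qed

lemma tendsto_integral_Re_trig_poly:
  assumes "finite H"
  shows "(\<lambda>n. \<integral>x. Re (trig_poly c H x) \<partial>\<mu> n) \<longlonglongrightarrow> (LINT \<theta>:{0..1}|lborel. Re (trig_poly c H \<theta>))"
proof -
  have "(\<integral>x. Re (trig_poly c H x) \<partial>\<mu> n) = Re (\<integral>x. trig_poly c H x \<partial>\<mu> n)" for n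
    by (intro integral_Re real_distribution.integrable_trig_poly[OF real_distribution_\<mu>])
  moreover have "(LINT \<theta>:{0..1}|lborel. Re (trig_poly c H \<theta>)) = Re (LINT \<theta>:{0..1}|lborel. trig_poly c H \<theta>)"
    using borel_integrable_atLeastAtMost'[OF continuous_on_trig_poly, of 0 1 c H]
    unfolding set_lebesgue_integral_def set_integrable_def by (subst integral_Re[symmetric]) simp_all
  ultimately show ?thesis
    using tendsto_Re[OF tendsto_integral_trig_poly[OF assms]] by simp
qed

lemma tendsto_integral_periodic:
  fixes g :: "real \<Rightarrow> real"
  assumes g: "continuous_on UNIV g" and g01: "g 0 = g 1"
  shows "(\<lambda>n. \<integral>x. g (frac x) \<partial>\<mu> n) \<longlonglongrightarrow> (LINT \<theta>:{0..1}|lborel. g \<theta>)"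
proof (rule tendstoI)
  fix e :: real assume "e > 0"
  then have "e/3 > 0"
    by simp
  then obtain c H where "finite H" and approx: "\<And>\<theta>. \<theta> \<in> {0..1} \<Longrightarrow> \<bar>g \<theta> - Re (trig_poly c H \<theta>)\<bar> < e/3"
    by (rule trig_poly_approx[OF continuous_on_subset[OF g subset_UNIV] g01]) (rule that)
  define T where "T \<theta> = Re (trig_poly c H \<theta>)" for \<theta>
  have frac_01: "frac x \<in> {0..1}" for x
    by (simp add: frac_lt_1 less_imp_le)
  have "eventually (\<lambda>n. dist (\<integral>x. T x \<partial>\<mu> n) (LINT \<theta>:{0..1}|lborel. T \<theta>) < e/3) sequentially"
    using tendsto_integral_Re_trig_poly[OF \<open>finite H\<close>] \<open>e/3 > 0\<close> unfolding T_def by (rule tendstoD)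
  moreover have "\<bar>(\<integral>x. g (frac x) \<partial>\<mu> n) - (\<integral>x. T x \<partial>\<mu> n)\<bar> \<le> e/3" for n
  proof (rule prob_space.abs_integral_diff_le[OF real_distribution.axioms(1)[OF real_distribution_\<mu>]])
    show "integrable (\<mu> n) (\<lambda>x. g (frac x))"
      using real_distribution.integrable_comp_frac[OF real_distribution_\<mu> g] .
    show "integrable (\<mu> n) T"
      unfolding T_def by (intro integrable_Re real_distribution.integrable_trig_poly[OF real_distribution_\<mu>])
    show "\<bar>g (frac x) - T x\<bar> \<le> e/3" for x
      using approx[OF frac_01, of x] by (simp add: T_def trig_poly_frac)
  qed
  moreover have "\<bar>(LINT \<theta>:{0..1}|lborel. g \<theta>) - (LINT \<theta>:{0..1}|lborel. T \<theta>)\<bar> \<le> e/3"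
    using approx unfolding T_def
    by (intro abs_set_integral_01_diff_le borel_integrable_atLeastAtMost' continuous_on_subset[OF g]
        continuous_intros) (auto simp: less_imp_le)
  ultimately show "eventually (\<lambda>n. dist (\<integral>x. g (frac x) \<partial>\<mu> n) (LINT \<theta>:{0..1}|lborel. g \<theta>) < e) sequentially"
    by (elim eventually_mono) (simp add: dist_real_def abs_less_iff abs_le_iff, smt (verit))
qed

lemma eventually_measure_frac_in_interval_gt:
  assumes "0 \<le> s" "s < r" "r \<le> 1" "a < r - s"
  shows "eventually (\<lambda>n. a < measure (\<mu> n) {x. frac x \<in> {s<..<r}}) sequentially"
proof -
  obtain g where g: "continuous_on UNIV g" "g 0 = g 1" "\<And>\<theta>. g \<theta> \<le> indicator {s<..<r} \<theta>"
    and a_less: "a < (LINT \<theta>:{0..1}|lborel. g \<theta>)"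
    using periodic_minorant_of_interval[OF assms] by blast
  have "eventually (\<lambda>n. a < (\<integral>x. g (frac x) \<partial>\<mu> n)) sequentially"
    using tendsto_integral_periodic[OF g(1,2)] a_less by (rule order_tendstoD)
  moreover have "(\<integral>x. g (frac x) \<partial>\<mu> n) \<le> measure (\<mu> n) {x. frac x \<in> {s<..<r}}" for n
  proof -
    interpret real_distribution "\<mu> n"
      by (rule real_distribution_\<mu>)
    have A: "{x. frac x \<in> {s<..<r}} \<in> sets (\<mu> n)"
      by measurable
    have "(\<integral>x. g (frac x) \<partial>\<mu> n) \<le> (\<integral>x. indicator {x. frac x \<in> {s<..<r}} x \<partial>\<mu> n)"
    proof (rule integral_mono)
      show "integrable (\<mu> n) (\<lambda>x. g (frac x))"
        by (rule integrable_comp_frac[OF g(1)])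
      show "integrable (\<mu> n) (indicator {x. frac x \<in> {s<..<r}} :: real \<Rightarrow> real)"
        using A by (simp add: less_top[symmetric])
      show "g (frac x) \<le> indicator {x. frac x \<in> {s<..<r}} x" for x
        using g(3)[of "frac x"] by (simp add: indicator_def)
    qed
    then show ?thesis
      using A by simp
  qed
  ultimately show ?thesis
    by (elim eventually_mono) (rule less_le_trans)
qed

lemma eventually_measure_frac_le_gt:
  assumes "a < t" "t \<le> 1"
  shows "eventually (\<lambda>n. a < measure (\<mu> n) {x. frac x \<le> t}) sequentially"
proof (cases "a < 0")
  case True
  then show ?thesis
    by (intro always_eventually allI) (rule less_le_trans[OF True measure_nonneg])
next
  case False
  have "eventually (\<lambda>n. a < measure (\<mu> n) {x. frac x \<in> {0<..<t}}) sequentially"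
    by (rule eventually_measure_frac_in_interval_gt) (use assms False in auto)
  moreover have "measure (\<mu> n) {x. frac x \<in> {0<..<t}} \<le> measure (\<mu> n) {x. frac x \<le> t}" for n
  proof -
    interpret real_distribution "\<mu> n"
      by (rule real_distribution_\<mu>)
    show ?thesis
      by (intro finite_measure_mono) auto
  qed
  ultimately show ?thesis
    by (elim eventually_mono) (rule less_le_trans)
qed

text \<open>The upper bound comes from the lower bound for the complementary interval \<open>(t, 1)\<close>.\<close>
lemma eventually_measure_frac_le_lt:
  assumes "t < a" "0 \<le> t"
  shows "eventually (\<lambda>n. measure (\<mu> n) {x. frac x \<le> t} < a) sequentially"
proof (cases "1 < a")
  case True
  show ?thesis
  proof (intro always_eventually allI)
    fix n
    interpret real_distribution "\<mu> n"
      by (rule real_distribution_\<mu>)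
    show "measure (\<mu> n) {x. frac x \<le> t} < a"
      using True by (rule le_less_trans[OF prob_le_1])
  qed
next
  case False
  have "eventually (\<lambda>n. 1 - a < measure (\<mu> n) {x. frac x \<in> {t<..<1}}) sequentially"
    by (rule eventually_measure_frac_in_interval_gt) (use assms False in auto)
  moreover have "measure (\<mu> n) {x. frac x \<le> t} + measure (\<mu> n) {x. frac x \<in> {t<..<1}} \<le> 1" for n
  proof -
    interpret real_distribution "\<mu> n"
      by (rule real_distribution_\<mu>)
    have "measure (\<mu> n) {x. frac x \<le> t} + measure (\<mu> n) {x. frac x \<in> {t<..<1}} =
        measure (\<mu> n) ({x. frac x \<le> t} \<union> {x. frac x \<in> {t<..<1}})"
      by (intro finite_measure_Union[symmetric]) auto
    also have "\<dots> \<le> 1"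
      by (rule prob_le_1)
    finally show ?thesis .
  qed
  ultimately show ?thesis
    by (elim eventually_mono) (smt (verit))
qed

lemma tendsto_measure_frac_le:
  assumes "0 \<le> t" "t \<le> 1"
  shows "(\<lambda>n. measure (\<mu> n) {x. frac x \<le> t}) \<longlonglongrightarrow> t"
  using assms eventually_measure_frac_le_gt eventually_measure_frac_le_lt by (intro order_tendstoI) auto

end

section \<open>Characteristic functions of independent atomless variables\<close>

lemma cis_eq_cis_imp: "cis a = cis b \<Longrightarrow> \<exists>k::int. a = b + 2 * pi * of_int k"
proof -
  assume "cis a = cis b"
  then obtain k :: int where "\<i> * complex_of_real a = \<i> * complex_of_real b + (of_int (2 * k) * pi) * \<i>"
    by (auto simp: cis_conv_exp exp_eq)
  then have "\<i> * complex_of_real a = \<i> * complex_of_real (b + 2 * pi * of_int k)"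
    by (simp add: algebra_simps)
  then show ?thesis
    by (intro exI[of _ k]) (simp only: mult_cancel_left of_real_eq_iff; simp)
qed

lemma (in prob_space) AE_eq_expectation_if_norm_eq_1:
  fixes f :: "'a \<Rightarrow> complex"
  assumes f: "f \<in> borel_measurable M" and norm_f: "\<And>x. x \<in> space M \<Longrightarrow> norm (f x) = 1"
    and norm_E: "norm (\<integral>x. f x \<partial>M) = 1"
  shows "AE x in M. f x = (\<integral>x. f x \<partial>M)"
proof -
  define \<phi> where "\<phi> = (\<integral>x. f x \<partial>M)"
  have int_f: "integrable M f"
    using f norm_f by (intro integrable_const_bound[where B=1]) auto
  have \<phi>: "cnj \<phi> * \<phi> = 1"
    using norm_E by (simp add: \<phi>_def complex_norm_square[symmetric] mult.commute)
  define h where "h x = 1 - Re (cnj \<phi> * f x)" for x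
  have h_nonneg: "0 \<le> h x" if "x \<in> space M" for x
    using complex_Re_le_cmod[of "cnj \<phi> * f x"] norm_f[OF that] norm_E
    by (simp add: h_def norm_mult \<phi>_def)
  have "Re \<phi> * Re \<phi> + Im \<phi> * Im \<phi> = 1"
    using norm_E cmod_power2[of \<phi>] by (simp add: \<phi>_def power2_eq_square)
  then have "integral\<^sup>L M h = 0"
    unfolding h_def using int_f by (simp add: prob_space \<phi>_def)
  moreover have "integrable M h"
    using int_f unfolding h_def by simp
  ultimately have "AE x in M. h x = 0"
    using h_nonneg by (subst integral_nonneg_eq_0_iff_AE[symmetric]) (auto intro: AE_I2)
  then show ?thesis
    unfolding \<phi>_def[symmetric]
  proof (rule AE_mp[OF _ AE_I2], intro impI)
    fix x assume x: "x \<in> space M" and "h x = 0"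
    define z where "z = cnj \<phi> * f x"
    have "Re z = 1" "norm z = 1"
      using \<open>h x = 0\<close> norm_f[OF x] norm_E by (simp_all add: h_def z_def norm_mult \<phi>_def)
    then have "z = 1"
      using cmod_power2[of z] by (simp add: complex_eq_iff)
    then show "f x = \<phi>"
      using \<phi> by (simp add: z_def) (metis mult.assoc mult.commute mult_1)
  qed
qed

lemma (in real_distribution) measure_countable_eq_0:
  assumes atomless: "\<And>x. measure M {x} = 0" and "countable C"
  shows "measure M C = 0"
proof -
  have "emeasure M C = (\<integral>\<^sup>+x. emeasure M {x} \<partial>count_space C)"
    using \<open>countable C\<close> by (intro emeasure_countable_singleton) auto
  also have "\<dots> = 0"
    using atomless by (simp add: emeasure_eq_measure)
  finally show ?thesis
    by (simp add: measure_def)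
qed

text \<open>If \<open>|\<phi>(u)| = 1\<close>, then \<open>cis (u x)\<close> is almost surely constant, so \<open>x\<close> lies almost surely in a
  translate of the lattice \<open>(2\<pi>/u) \<int>\<close>, which is a null set for an atomless distribution.\<close>
lemma (in real_distribution) norm_char_lt_1:
  assumes atomless: "\<And>x. measure M {x} = 0" and "u \<noteq> 0"
  shows "norm (char M u) < 1"
proof (rule ccontr)
  assume "\<not> norm (char M u) < 1"
  then have norm_1: "norm (char M u) = 1"
    using cmod_char_le_1[of u] by linarith
  have char_eq: "char M u = (\<integral>x. cis (u * x) \<partial>M)"
    by (simp add: char_def cis_conv_exp)
  have "AE x in M. cis (u * x) = (\<integral>x. cis (u * x) \<partial>M)"
  proof (rule AE_eq_expectation_if_norm_eq_1)
    show "(\<lambda>x. cis (u * x)) \<in> borel_measurable M"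
      unfolding measurable_cong_sets[OF events_eq_borel refl]
      by (intro borel_measurable_continuous_onI continuous_intros)
  qed (use norm_1 char_eq in simp_all)
  moreover have "char M u \<noteq> 0"
    using norm_1 by auto
  then have "char M u = cis (Arg (char M u))"
    using norm_1 by (simp add: cis_Arg sgn_eq)
  ultimately have "AE x in M. cis (u * x) = cis (Arg (char M u))"
    using char_eq by simp
  then have "AE x in M. x \<in> range (\<lambda>k::int. (Arg (char M u) + 2 * pi * of_int k) / u)"
  proof (rule eventually_mono)
    fix x assume "cis (u * x) = cis (Arg (char M u))"
    then obtain k :: int where "u * x = Arg (char M u) + 2 * pi * of_int k"
      using cis_eq_cis_imp by blast
    then show "x \<in> range (\<lambda>k::int. (Arg (char M u) + 2 * pi * of_int k) / u)"
      using \<open>u \<noteq> 0\<close> by (intro range_eqI[of _ _ k]) (simp add: field_simps)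
  qed
  moreover have "range (\<lambda>k::int. (Arg (char M u) + 2 * pi * of_int k) / u) \<in> events"
    by (rule sets.countable) auto
  ultimately have "prob (range (\<lambda>k::int. (Arg (char M u) + 2 * pi * of_int k) / u)) = 1"
    by (simp add: AE_in_set_eq_1)
  moreover have "prob (range (\<lambda>k::int. (Arg (char M u) + 2 * pi * of_int k) / u)) = 0"
    using atomless by (rule measure_countable_eq_0) simp
  ultimately show False
    by simp
qed

lemma prod_less_1:
  fixes f :: "'i \<Rightarrow> 'a::linordered_idom"
  assumes "finite I" "I \<noteq> {}" "\<And>i. i \<in> I \<Longrightarrow> 0 \<le> f i \<and> f i < 1"
  shows "(\<Prod>i\<in>I. f i) < 1"
proof -
  obtain j where "j \<in> I"
    using \<open>I \<noteq> {}\<close> by blast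
  have "(\<Prod>i\<in>I. f i) = f j * (\<Prod>i\<in>I - {j}. f i)"
    using \<open>finite I\<close> \<open>j \<in> I\<close> by (rule prod.remove)
  also have "\<dots> \<le> f j * 1"
    using assms(3) \<open>j \<in> I\<close> by (intro mult_left_mono prod_le_1) (auto simp: less_imp_le)
  also have "\<dots> < 1"
    using assms \<open>j \<in> I\<close> by simp
  finally show ?thesis .
qed

lemma (in prob_space) char_distr_add_const:
  assumes "random_variable borel X"
  shows "char (distr M borel (\<lambda>\<omega>. c + X \<omega>)) u = cis (u * c) * char (distr M borel X) u"
  using assms
  by (simp add: char_def integral_distr cis_conv_exp distrib_left exp_add mult.assoc)

text \<open>By independence the characteristic function equals \<open>cis (u c) * q ^ n\<close>, where \<open>q\<close> is a
  product of characteristic functions of atomless distributions, so \<open>|q| < 1\<close>.\<close>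
lemma (in prob_space) char_row_iid_sum_tendsto_0:
  fixes L :: "'i \<Rightarrow> nat \<Rightarrow> 'a \<Rightarrow> real"
  assumes "finite I" "I \<noteq> {}"
    and indep: "indep_vars (\<lambda>_. borel) (\<lambda>(i, k). L i k) (I \<times> {1..})"
    and ident: "\<And>i k. i \<in> I \<Longrightarrow> k \<ge> 1 \<Longrightarrow> distr M borel (L i k) = distr M borel (L i 1)"
    and atomless: "\<And>i x. i \<in> I \<Longrightarrow> prob {\<omega>\<in>space M. L i 1 \<omega> = x} = 0"
    and "u \<noteq> 0"
  shows "(\<lambda>n. char (distr M borel (\<lambda>\<omega>. c + (\<Sum>(i, k)\<in>I \<times> {1..n}. L i k \<omega>))) u) \<longlonglongrightarrow> 0"
proof -
  have rv: "random_variable borel (L i k)" if "i \<in> I" "k \<ge> 1" for i k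
    using indep that unfolding indep_vars_def by auto
  define q where "q = (\<Prod>i\<in>I. char (distr M borel (L i 1)) u)"
  have "norm (char (distr M borel (L i 1)) u) < 1" if "i \<in> I" for i
  proof (rule real_distribution.norm_char_lt_1)
    show "real_distribution (distr M borel (L i 1))"
      using rv[OF that] by simp
    show "measure (distr M borel (L i 1)) {x} = 0" for x
      using atomless[OF that, of x] rv[OF that]
      by (simp add: measure_distr vimage_def Int_def conj_commute)
  qed (rule \<open>u \<noteq> 0\<close>)
  then have "norm q < 1"
    unfolding q_def prod_norm[symmetric] using \<open>finite I\<close> \<open>I \<noteq> {}\<close>
    by (intro prod_less_1) auto
  moreover have "char (distr M borel (\<lambda>\<omega>. c + (\<Sum>(i, k)\<in>I \<times> {1..n}. L i k \<omega>))) u = cis (u * c) * q ^ n" for n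
  proof -
    have indep_n: "indep_vars (\<lambda>_. borel) (\<lambda>(i, k). L i k) (I \<times> {1..n})"
      using indep by (rule indep_vars_subset) auto
    have "char (distr M borel (\<lambda>\<omega>. \<Sum>(i, k)\<in>I \<times> {1..n}. L i k \<omega>)) u =
        (\<Prod>(i, k)\<in>I \<times> {1..n}. char (distr M borel (L i k)) u)"
      using char_distr_sum[OF indep_n] by (simp add: case_prod_beta)
    also have "\<dots> = (\<Prod>i\<in>I. \<Prod>k\<in>{1..n}. char (distr M borel (L i 1)) u)"
      unfolding prod.cartesian_product[symmetric]
      by (intro prod.cong refl arg_cong[where f="\<lambda>N. char N u"] ident) auto
    also have "\<dots> = q ^ n"
      by (simp add: q_def prod_power_distrib)
    finally have "char (distr M borel (\<lambda>\<omega>. \<Sum>(i, k)\<in>I \<times> {1..n}. L i k \<omega>)) u = q ^ n" .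
    moreover have "random_variable borel (\<lambda>\<omega>. \<Sum>(i, k)\<in>I \<times> {1..n}. L i k \<omega>)"
      by (intro borel_measurable_sum) (auto intro: rv)
    ultimately show ?thesis
      by (simp add: char_distr_add_const)
  qed
  ultimately show ?thesis
    by (simp add: LIMSEQ_power_zero tendsto_mult_right_zero)
qed

section \<open>Benford behaviour of products\<close>

lemma log_prod:
  fixes f :: "'a \<Rightarrow> real"
  assumes "finite A" "\<And>j. j \<in> A \<Longrightarrow> f j \<noteq> 0"
  shows "log B (\<Prod>j\<in>A. f j) = (\<Sum>j\<in>A. log B (f j))"
  using assms by (simp add: log_def ln_prod sum_divide_distrib)

lemma significand_le_iff:
  assumes "B > 1" "x > 0" "D > 0"
  shows "significand B x \<le> D \<longleftrightarrow> frac (log B x) \<le> log B D"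
proof -
  have "significand B x = B powr frac (log B x)"
    using assms by (simp add: significand_def frac_def powr_diff)
  moreover have "B powr frac (log B x) \<le> D \<longleftrightarrow> log B (B powr frac (log B x)) \<le> log B D"
    using assms by (subst log_le_cancel_iff) auto
  ultimately show ?thesis
    using assms by simp
qed

lemma (in prob_space) strong_Benford_if_char_log_tendsto_0:
  assumes "B > 1" and Y_pos: "\<And>n \<omega>. \<omega> \<in> space M \<Longrightarrow> 0 < Y n \<omega>"
    and rv: "\<And>n. random_variable borel (\<lambda>\<omega>. log B (Y n \<omega>))"
    and char_tendsto_0:
      "\<And>h::int. h \<noteq> 0 \<Longrightarrow> (\<lambda>n. char (distr M borel (\<lambda>\<omega>. log B (Y n \<omega>))) (2*pi * of_int h)) \<longlonglongrightarrow> 0"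
  shows "strong_Benford M B Y"
  unfolding strong_Benford_def
proof
  interpret log_Y: vanishing_fourier_coefficients "\<lambda>n. distr M borel (\<lambda>\<omega>. log B (Y n \<omega>))"
    using rv char_tendsto_0 by (intro vanishing_fourier_coefficients.intro) simp_all
  fix D assume D: "D \<in> {1..B}"
  have "{\<omega>\<in>space M. significand B (Y n \<omega>) \<le> D} = (\<lambda>\<omega>. log B (Y n \<omega>)) -` {x. frac x \<le> log B D} \<inter> space M"
    for n
    using D \<open>B > 1\<close> by (auto simp: significand_le_iff Y_pos)
  moreover have "(\<lambda>n. measure (distr M borel (\<lambda>\<omega>. log B (Y n \<omega>))) {x. frac x \<le> log B D}) \<longlonglongrightarrow> log B D"
    using D \<open>B > 1\<close> by (intro log_Y.tendsto_measure_frac_le) auto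
  ultimately show "(\<lambda>n. measure M {\<omega>\<in>space M. significand B (Y n \<omega>) \<le> D}) \<longlonglongrightarrow> log B D"
    using rv by (simp add: measure_distr)
qed

lemma (in prob_space) char_log_iid_product_tendsto_0:
  fixes P :: "'i \<Rightarrow> nat \<Rightarrow> 'a \<Rightarrow> real"
  assumes "B > 1" "finite I" "I \<noteq> {}" "u \<noteq> 0"
    and pos: "\<And>i k \<omega>. i \<in> I \<Longrightarrow> k \<ge> 1 \<Longrightarrow> \<omega> \<in> space M \<Longrightarrow> 0 < P i k \<omega>"
    and indep: "indep_vars (\<lambda>_. borel) (\<lambda>(i, k). P i k) (I \<times> {1..})"
    and ident: "\<And>i k. i \<in> I \<Longrightarrow> k \<ge> 1 \<Longrightarrow> distr M borel (P i k) = distr M borel (P i 1)"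
    and atomless: "\<And>i x. i \<in> I \<Longrightarrow> prob {\<omega>\<in>space M. P i 1 \<omega> = x} = 0"
  shows "(\<lambda>n. char (distr M borel (\<lambda>\<omega>. c + (\<Sum>(i, k)\<in>I \<times> {1..n}. log B (P i k \<omega>)))) u) \<longlonglongrightarrow> 0"
proof -
  define L where "L i k = (\<lambda>\<omega>. log B (P i k \<omega>))" for i k
  have rv_P: "random_variable borel (P i k)" if "i \<in> I" "k \<ge> 1" for i k
    using indep that unfolding indep_vars_def by auto
  have "indep_vars (\<lambda>_. borel) (\<lambda>(i, k). L i k) (I \<times> {1..})"
    using indep_vars_compose2[OF indep, of "\<lambda>_. log B" "\<lambda>_. borel"]
    by (simp add: L_def case_prod_beta')
  moreover have "distr M borel (L i k) = distr M borel (L i 1)" if "i \<in> I" "k \<ge> 1" for i k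
  proof -
    have "distr M borel (L i k) = distr (distr M borel (P i k)) borel (log B)"
      using rv_P[OF that] by (simp add: distr_distr L_def comp_def)
    also have "\<dots> = distr M borel (L i 1)"
      using rv_P[OF that(1)] by (simp add: ident[OF that] distr_distr L_def comp_def)
    finally show ?thesis .
  qed
  moreover have "prob {\<omega>\<in>space M. L i 1 \<omega> = x} = 0" if "i \<in> I" for i x
  proof -
    have "{\<omega>\<in>space M. L i 1 \<omega> = x} = {\<omega>\<in>space M. P i 1 \<omega> = B powr x}"
      using pos[OF that, of 1] \<open>B > 1\<close> by (auto simp: L_def)
    then show ?thesis
      using atomless[OF that] by simp
  qed
  ultimately show ?thesis
    using char_row_iid_sum_tendsto_0[OF \<open>finite I\<close> \<open>I \<noteq> {}\<close> _ _ _ \<open>u \<noteq> 0\<close>]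
    unfolding L_def by blast
qed

lemma (in prob_space) strong_Benford_iid_product:
  fixes P :: "'i \<Rightarrow> nat \<Rightarrow> 'a \<Rightarrow> real" and Y :: "nat \<Rightarrow> 'a \<Rightarrow> real"
  assumes "B > 1" "finite I" "I \<noteq> {}" "V > 0"
    and pos: "\<And>i k \<omega>. i \<in> I \<Longrightarrow> k \<ge> 1 \<Longrightarrow> \<omega> \<in> space M \<Longrightarrow> 0 < P i k \<omega>"
    and indep: "indep_vars (\<lambda>_. borel) (\<lambda>(i, k). P i k) (I \<times> {1..})"
    and ident: "\<And>i k. i \<in> I \<Longrightarrow> k \<ge> 1 \<Longrightarrow> distr M borel (P i k) = distr M borel (P i 1)"
    and atomless: "\<And>i x. i \<in> I \<Longrightarrow> prob {\<omega>\<in>space M. P i 1 \<omega> = x} = 0"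
    and Y: "\<And>n \<omega>. \<omega> \<in> space M \<Longrightarrow> Y n \<omega> = V * (\<Prod>(i, k)\<in>I \<times> {1..n}. P i k \<omega>)"
  shows "strong_Benford M B Y"
proof (rule strong_Benford_if_char_log_tendsto_0)
  define Z where "Z n = (\<lambda>\<omega>. log B V + (\<Sum>(i, k)\<in>I \<times> {1..n}. log B (P i k \<omega>)))" for n
  have P_pos: "0 < P (fst j) (snd j) \<omega>" if "j \<in> I \<times> {1..n}" "\<omega> \<in> space M" for j n \<omega>
    using pos that by auto
  then have prod_P_pos: "0 < (\<Prod>(i, k)\<in>I \<times> {1..n}. P i k \<omega>)" if "\<omega> \<in> space M" for n \<omega>
    using that by (simp add: prod_pos case_prod_beta)
  then show "0 < Y n \<omega>" if "\<omega> \<in> space M" for n \<omega>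
    using that \<open>V > 0\<close> by (simp add: Y)
  have log_Y: "log B (Y n \<omega>) = Z n \<omega>" if "\<omega> \<in> space M" for n \<omega>
    using prod_P_pos[OF that] P_pos[OF _ that] \<open>V > 0\<close> \<open>finite I\<close>
    by (simp add: Y[OF that] Z_def log_mult_pos) (subst log_prod; fastforce simp: case_prod_beta)
  have rv_P: "random_variable borel (P i k)" if "i \<in> I" "k \<ge> 1" for i k
    using indep that unfolding indep_vars_def by auto
  have "random_variable borel (Z n)" for n
    unfolding Z_def by (intro borel_measurable_add borel_measurable_const borel_measurable_sum)
      (auto intro!: borel_measurable_log rv_P)
  then show "random_variable borel (\<lambda>\<omega>. log B (Y n \<omega>))" for n
    by (rule measurable_cong[THEN iffD1, rotated]) (simp add: log_Y)
  have distr_log_Y: "distr M borel (\<lambda>\<omega>. log B (Y n \<omega>)) = distr M borel (Z n)" for n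
    by (intro distr_cong) (simp_all add: log_Y)
  show "(\<lambda>n. char (distr M borel (\<lambda>\<omega>. log B (Y n \<omega>))) (2*pi * of_int h)) \<longlonglongrightarrow> 0"
    if "h \<noteq> 0" for h :: int
  proof -
    have "2*pi * of_int h \<noteq> 0"
      using that by simp
    with \<open>B > 1\<close> \<open>finite I\<close> \<open>I \<noteq> {}\<close>
    have "(\<lambda>n. char (distr M borel (Z n)) (2*pi * of_int h)) \<longlonglongrightarrow> 0"
      unfolding Z_def using pos indep ident atomless by (rule char_log_iid_product_tendsto_0)
    with distr_log_Y show ?thesis
      by simp
  qed
qed fact

lemma prod_of_multiplicative_recurrence:
  fixes s p :: "nat \<Rightarrow> 'a::comm_monoid_mult"
  assumes "\<And>n. s (Suc n) = p (Suc n) * s n"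
  shows "s n = s 0 * (\<Prod>k\<in>{1..n}. p k)"
  by (induction n) (simp_all add: assms prod.cl_ivl_Suc mult_ac)

theorem corollary1p8:
  fixes M :: "'a measure" and B :: real and m :: nat
    and a b :: "nat \<Rightarrow> real"
    and lo hi :: "nat \<Rightarrow> 'a \<Rightarrow> nat \<Rightarrow> real"
    and P :: "nat \<Rightarrow> nat \<Rightarrow> 'a \<Rightarrow> real"
    and \<mu> \<sigma>2 :: real
  assumes "prob_space M"
    and "B > 1"
    and "m \<ge> 1"
    and box0: "\<And>i. i < m \<Longrightarrow> a i < b i"
    and start: "\<And>\<omega> i. \<omega> \<in> space M \<Longrightarrow> i < m \<Longrightarrow> lo 0 \<omega> i = a i \<and> hi 0 \<omega> i = b i"
    and nested: "\<And>n \<omega> i. \<omega> \<in> space M \<Longrightarrow> i < m \<Longrightarrow>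
         lo n \<omega> i \<le> lo (Suc n) \<omega> i \<and> lo (Suc n) \<omega> i < hi (Suc n) \<omega> i \<and> hi (Suc n) \<omega> i \<le> hi n \<omega> i"
    and cut: "\<And>n \<omega> i. \<omega> \<in> space M \<Longrightarrow> i < m \<Longrightarrow>
         hi (Suc n) \<omega> i - lo (Suc n) \<omega> i = P i (Suc n) \<omega> * (hi n \<omega> i - lo n \<omega> i)"
    and meas: "\<And>i n. i < m \<Longrightarrow> n \<ge> 1 \<Longrightarrow> P i n \<in> borel_measurable M"
    and range01: "\<And>i n \<omega>. i < m \<Longrightarrow> n \<ge> 1 \<Longrightarrow> \<omega> \<in> space M \<Longrightarrow> 0 < P i n \<omega> \<and> P i n \<omega> < 1"
    and indep: "prob_space.indep_vars M (\<lambda>_. borel) (\<lambda>(i, n). P i n) ({..<m} \<times> {1..})"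
    and ident: "\<And>i n. i < m \<Longrightarrow> n \<ge> 1 \<Longrightarrow> distr M borel (P i n) = distr M borel (P i 1)"
    and continuous: "\<And>i x. i < m \<Longrightarrow> measure M {\<omega>\<in>space M. P i 1 \<omega> = x} = 0"
    and int1: "\<And>i. i < m \<Longrightarrow> integrable M (\<lambda>\<omega>. log B (P i 1 \<omega>))"
    and int2: "\<And>i. i < m \<Longrightarrow> integrable M (\<lambda>\<omega>. (log B (P i 1 \<omega>))\<^sup>2)"
    and int3: "\<And>i. i < m \<Longrightarrow> integrable M (\<lambda>\<omega>. \<bar>log B (P i 1 \<omega>)\<bar> ^ 3)"
    and mean: "\<And>i. i < m \<Longrightarrow> prob_space.expectation M (\<lambda>\<omega>. log B (P i 1 \<omega>)) = \<mu>"
    and var: "\<And>i. i < m \<Longrightarrow> prob_space.variance M (\<lambda>\<omega>. log B (P i 1 \<omega>)) = \<sigma>2"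
    and "\<sigma>2 > 0"
  shows "strong_Benford M B (\<lambda>n \<omega>. box_vol m (lo n \<omega>) (hi n \<omega>))"
proof -
  define V where "V = (\<Prod>i<m. b i - a i)"
  have vol: "box_vol m (lo n \<omega>) (hi n \<omega>) = V * (\<Prod>(i, k)\<in>{..<m} \<times> {1..n}. P i k \<omega>)"
    if "\<omega> \<in> space M" for n \<omega>
  proof -
    have "hi n \<omega> i - lo n \<omega> i = (b i - a i) * (\<Prod>k\<in>{1..n}. P i k \<omega>)" if "i < m" for i
      using prod_of_multiplicative_recurrence[of "\<lambda>n. hi n \<omega> i - lo n \<omega> i" "\<lambda>k. P i k \<omega>"]
        cut[OF \<open>\<omega> \<in> space M\<close> that] start[OF \<open>\<omega> \<in> space M\<close> that] by simp
    then show ?thesis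
      by (simp add: box_vol_def V_def prod.distrib prod.cartesian_product[symmetric])
  qed
  show ?thesis
  proof (rule prob_space.strong_Benford_iid_product[where I="{..<m}" and V=V])
    show "V > 0"
      unfolding V_def using box0 by (intro prod_pos) simp
    show "{..<m} \<noteq> {}"
      using \<open>m \<ge> 1\<close> by (intro ex_in_conv[THEN iffD1] exI[of _ 0]) simp
    show "0 < P i k \<omega>" if "i \<in> {..<m}" "k \<ge> 1" "\<omega> \<in> space M" for i k \<omega>
      using range01 that by simp
    show "distr M borel (P i k) = distr M borel (P i 1)" if "i \<in> {..<m}" "k \<ge> 1" for i k
      using that by (intro ident) auto
  qed (use \<open>prob_space M\<close> \<open>B > 1\<close> indep continuous vol in auto)
qed

end
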